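(* Let $X=[\alpha,\beta]$ be a compact interval, $w$ a positive continuous function on $X$, and $\langle f,g\rangle_w=\int_Xf(x)\overline{g(x)}w(x)\,dx$. Let $B_1,\dots,B_n\in C(X)$ be linearly independent, $U_n$ their span, and $S=(s_{i,j})$ with $s_{i,j}=\langle B_i,B_j\rangle_w$. Assume $S$ is tridiagonal ($s_{i,j}=0$ if $|i-j|\ge2$) and row diagonally dominant with factor $c\in(0,1)$, i.e. $|s_{j-1,j}|+|s_{j,j+1}|\le c\,|s_{j,j}|$ for $j=1,\dots,n$, with the convention $s_{0,1}=s_{n,n+1}=0$. Then $$\|P^{U_n}\|_{op}\le\frac{\max_{x\in X}\sum_{j=1}^n|B_j(x)|}{1-c}\max_{1\le j\le n}\frac{\int_X|B_j(y)|w(y)\,dy}{\int_X|B_j(y)|^2w(y)\,dy}.$$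
   Context: $P^{U_n}:C(X)\to C(X)$ maps $f$ to its best approximation from $U_n$ in the norm $\|f\|_w=\sqrt{\langle f,f\rangle_w}$ (the $\langle\cdot,\cdot\rangle_w$-orthogonal projection onto $U_n$), and $\|P^{U_n}\|_{op}=\sup_{f\ne0}\|P^{U_n}f\|_X/\|f\|_X$ with $\|f\|_X=\max_{x\in X}|f(x)|$. *)

theory Defs
  imports "HOL-Analysis.Analysis"
begin

text \<open>Functions on the interval X = [a..b] are complex valued functions on the reals;
  only their values on X matter.\<close>

definition winner :: "real \<Rightarrow> real \<Rightarrow> (real \<Rightarrow> real) \<Rightarrow> (real \<Rightarrow> complex) \<Rightarrow> (real \<Rightarrow> complex) \<Rightarrow> complex" where
  "winner a b w f g = integral {a..b} (\<lambda>x. f x * cnj (g x) * of_real (w x))"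

definition wnorm :: "real \<Rightarrow> real \<Rightarrow> (real \<Rightarrow> real) \<Rightarrow> (real \<Rightarrow> complex) \<Rightarrow> real" where
  "wnorm a b w f = sqrt (Re (winner a b w f f))"

definition supnorm :: "real \<Rightarrow> real \<Rightarrow> (real \<Rightarrow> complex) \<Rightarrow> real" where
  "supnorm a b f = (SUP x\<in>{a..b}. cmod (f x))"

definition spanB :: "nat \<Rightarrow> (nat \<Rightarrow> real \<Rightarrow> complex) \<Rightarrow> (real \<Rightarrow> complex) set" where
  "spanB n B = {(\<lambda>x. \<Sum>j=1..n. c j * B j x) | c. True}"

definition lin_indep_on :: "real \<Rightarrow> real \<Rightarrow> nat \<Rightarrow> (nat \<Rightarrow> real \<Rightarrow> complex) \<Rightarrow> bool" where
  "lin_indep_on a b n B =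
     (\<forall>c::nat \<Rightarrow> complex. (\<forall>x\<in>{a..b}. (\<Sum>j=1..n. c j * B j x) = 0) \<longrightarrow> (\<forall>j\<in>{1..n}. c j = 0))"

definition projU :: "real \<Rightarrow> real \<Rightarrow> (real \<Rightarrow> real) \<Rightarrow> nat \<Rightarrow> (nat \<Rightarrow> real \<Rightarrow> complex)
                     \<Rightarrow> (real \<Rightarrow> complex) \<Rightarrow> (real \<Rightarrow> complex)" where
  "projU a b w n B f = (THE u. u \<in> spanB n B \<and>
       (\<forall>v\<in>spanB n B. wnorm a b w (\<lambda>x. f x - u x) \<le> wnorm a b w (\<lambda>x. f x - v x)))"

definition projU_opnorm :: "real \<Rightarrow> real \<Rightarrow> (real \<Rightarrow> real) \<Rightarrow> nat \<Rightarrow> (nat \<Rightarrow> real \<Rightarrow> complex) \<Rightarrow> real" where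
  "projU_opnorm a b w n B =
     Sup {supnorm a b (projU a b w n B f) / supnorm a b f | f.
            continuous_on {a..b} f \<and> (\<exists>x\<in>{a..b}. f x \<noteq> 0)}"

end

theory Submission
  imports Defs "Jordan_Normal_Form.Determinant"
begin

text \<open>With \<open>G i k = \<langle>B_k, B_i\<rangle>_w\<close>, the projection of \<open>f\<close> is \<open>\<Sum>k x_k B_k\<close> where \<open>x\<close> solves the
  normal equations \<open>G x = (\<langle>f, B_i\<rangle>_w)_i\<close>. Reading row \<open>j\<close> of these equations at an index
  where \<open>|x_j|\<close> is maximal, diagonal dominance gives
  \<open>(1 - c) \<langle>B_j, B_j\<rangle>_w |x_j| \<le> |\<langle>f, B_j\<rangle>_w| \<le> \<parallel>f\<parallel>_X \<integral> |B_j| w\<close>,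
  and \<open>|\<Sum>k x_k B_k(x)| \<le> |x_j| \<Sum>k |B_k(x)|\<close> finishes the estimate.\<close>

lemma square_system_solvable_if_injective:
  fixes G :: "nat \<Rightarrow> nat \<Rightarrow> 'a::field" and r :: "nat \<Rightarrow> 'a"
  assumes inj: "\<And>v. \<forall>i\<in>{1..n}. (\<Sum>k=1..n. G i k * v k) = 0 \<Longrightarrow> \<forall>k\<in>{1..n}. v k = 0"
  shows "\<exists>x. \<forall>i\<in>{1..n}. (\<Sum>k=1..n. G i k * x k) = r i"
proof -
  define A where "A = Matrix.mat n n (\<lambda>(i, k). G (Suc i) (Suc k))"
  have A: "A \<in> carrier_mat n n" unfolding A_def by auto
  have sum_shift: "(\<Sum>k=1..n. g k) = (\<Sum>k<n. g (Suc k))" for g :: "nat \<Rightarrow> 'a"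
    by (induct n) auto
  have mult_vec: "(A *\<^sub>v v) $ (i - 1) = (\<Sum>k=1..n. G i k * v $ (k - 1))"
    if "i \<in> {1..n}" "v \<in> carrier_vec n" for i v
    using that unfolding A_def sum_shift by (auto simp: scalar_prod_def intro!: sum.cong)
  have "Determinant.det A \<noteq> 0"
  proof
    assume "Determinant.det A = 0"
    then obtain v where v: "v \<in> carrier_vec n" "v \<noteq> 0\<^sub>v n" "A *\<^sub>v v = 0\<^sub>v n"
      using det_0_iff_vec_prod_zero_field[OF A] by auto
    have "\<forall>i\<in>{1..n}. (\<Sum>k=1..n. G i k * v $ (k - 1)) = 0"
    proof
      fix i assume i: "i \<in> {1..n}"
      then have "(A *\<^sub>v v) $ (i - 1) = 0" using v by auto
      then show "(\<Sum>k=1..n. G i k * v $ (k - 1)) = 0" using mult_vec[OF i v(1)] by simp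
    qed
    then have "\<forall>k\<in>{1..n}. v $ (k - 1) = 0" by (rule inj)
    then have "v $ k = 0" if "k < n" for k
      using that by (metis Suc_leI atLeastAtMost_iff diff_Suc_1 le_add1 plus_1_eq_Suc)
    then have "v = 0\<^sub>v n" using v(1) by (intro eq_vecI) auto
    with v(2) show False by simp
  qed
  from det_non_zero_imp_unit[OF A this, unfolded Units_def, of "()"]
  obtain M where M: "M \<in> carrier_mat n n" and AM: "A * M = 1\<^sub>m n"
    by (auto simp: ring_mat_def)
  define rv where "rv = Matrix.vec n (\<lambda>i. r (Suc i))"
  have rv: "rv \<in> carrier_vec n" unfolding rv_def by auto
  have solution: "A *\<^sub>v (M *\<^sub>v rv) = rv"
    using assoc_mult_mat_vec[OF A M rv] AM rv by simp
  show ?thesis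
  proof (intro exI ballI)
    fix i assume i: "i \<in> {1..n}"
    have "(A *\<^sub>v (M *\<^sub>v rv)) $ (i - 1) = r i" using solution i unfolding rv_def by auto
    then show "(\<Sum>k=1..n. G i k * (M *\<^sub>v rv) $ (k - 1)) = r i"
      using mult_vec[OF i, of "M *\<^sub>v rv"] M rv by auto
  qed
qed

lemma row_dominant_max_index:
  fixes G :: "nat \<Rightarrow> nat \<Rightarrow> 'a::real_normed_field" and v :: "nat \<Rightarrow> 'a"
  assumes "finite K" "K \<noteq> {}"
    and dominant: "\<forall>j\<in>K. (\<Sum>k\<in>K - {j}. norm (G j k)) \<le> c * norm (G j j)"
  shows "\<exists>j\<in>K. (\<forall>k\<in>K. norm (v k) \<le> norm (v j)) \<and>
           (1 - c) * norm (G j j) * norm (v j) \<le> norm (\<Sum>k\<in>K. G j k * v k)"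
proof -
  obtain j where j: "j \<in> K" and jmax: "\<forall>k\<in>K. norm (v k) \<le> norm (v j)"
  proof -
    have "Max ((\<lambda>k. norm (v k)) ` K) \<in> (\<lambda>k. norm (v k)) ` K" using assms(1,2) by simp
    then obtain j where "j \<in> K" "norm (v j) = Max ((\<lambda>k. norm (v k)) ` K)" by auto
    moreover have "\<forall>k\<in>K. norm (v k) \<le> Max ((\<lambda>k. norm (v k)) ` K)" using assms(1) by simp
    ultimately show ?thesis using that by simp
  qed
  have split: "(\<Sum>k\<in>K. G j k * v k) = G j j * v j + (\<Sum>k\<in>K - {j}. G j k * v k)"
    using sum.remove[OF assms(1) j] by simp
  have "norm (\<Sum>k\<in>K - {j}. G j k * v k) \<le> (\<Sum>k\<in>K - {j}. norm (G j k) * norm (v j))"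
    using jmax by (intro order.trans[OF norm_sum] sum_mono)
      (auto simp: norm_mult intro!: mult_left_mono)
  also have "\<dots> \<le> c * norm (G j j) * norm (v j)"
    using dominant j by (simp add: sum_distrib_right[symmetric] mult_right_mono)
  finally have "norm (\<Sum>k\<in>K - {j}. G j k * v k) \<le> c * norm (G j j) * norm (v j)" .
  moreover have "norm (G j j) * norm (v j) - norm (\<Sum>k\<in>K - {j}. G j k * v k)
      \<le> norm (\<Sum>k\<in>K. G j k * v k)"
    unfolding split using norm_diff_ineq[of "G j j * v j"] by (simp add: norm_mult)
  ultimately show ?thesis using j jmax by (auto simp: algebra_simps)
qed

lemma row_dominant_injective:
  fixes G :: "nat \<Rightarrow> nat \<Rightarrow> 'a::real_normed_field" and v :: "nat \<Rightarrow> 'a"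
  assumes "finite K" and c: "c < 1" and diag: "\<forall>j\<in>K. G j j \<noteq> 0"
    and dominant: "\<forall>j\<in>K. (\<Sum>k\<in>K - {j}. norm (G j k)) \<le> c * norm (G j j)"
    and zero: "\<forall>i\<in>K. (\<Sum>k\<in>K. G i k * v k) = 0"
  shows "\<forall>k\<in>K. v k = 0"
proof (cases "K = {}")
  case False
  then obtain j where j: "j \<in> K" and jmax: "\<forall>k\<in>K. norm (v k) \<le> norm (v j)"
    and "(1 - c) * norm (G j j) * norm (v j) \<le> 0"
    using row_dominant_max_index[OF assms(1) False dominant, of v] zero by auto
  moreover have "0 < (1 - c) * norm (G j j)" using c diag j by simp
  ultimately have "norm (v j) \<le> 0"
    using mult_le_cancel_left_pos[of "(1 - c) * norm (G j j)" "norm (v j)" 0] by simp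
  with jmax show ?thesis by (meson norm_le_zero_iff order_trans)
qed simp

lemma tridiagonal_offdiag_sum:
  fixes G :: "nat \<Rightarrow> nat \<Rightarrow> 'a::real_normed_vector"
  assumes tridiag: "\<forall>k\<in>{1..n}. 2 \<le> \<bar>int j - int k\<bar> \<longrightarrow> G j k = 0" and j: "j \<in> {1..n}"
  shows "(\<Sum>k\<in>{1..n} - {j}. norm (G j k))
       = (if j = 1 then 0 else norm (G j (j - 1))) + (if j = n then 0 else norm (G j (j + 1)))"
proof -
  let ?K = "{1..n} - {j}"
  have entry: "norm (G j k) = (if k = j - 1 then norm (G j (j - 1)) else 0)
                            + (if k = j + 1 then norm (G j (j + 1)) else 0)" if "k \<in> ?K" for k
    using that tridiag j by (cases "k = j - 1 \<or> k = j + 1") auto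
  have "(\<Sum>k\<in>?K. norm (G j k)) = (\<Sum>k\<in>?K. if k = j - 1 then norm (G j (j - 1)) else 0)
                                    + (\<Sum>k\<in>?K. if k = j + 1 then norm (G j (j + 1)) else 0)"
    unfolding sum.distrib[symmetric] by (rule sum.cong[OF refl entry])
  moreover have "(j - 1 \<in> ?K) = (j \<noteq> 1)" "(j + 1 \<in> ?K) = (j \<noteq> n)" using j by auto
  ultimately show ?thesis by (simp add: sum.delta')
qed

lemma continuous_on_Icc_SUP_upper:
  fixes g :: "real \<Rightarrow> real"
  assumes "continuous_on {a..b} g" "y \<in> {a..b}"
  shows "g y \<le> (SUP x\<in>{a..b}. g x)"
  using assms compact_continuous_image[OF assms(1) compact_Icc]
  by (intro cSUP_upper bounded_imp_bdd_above compact_imp_bounded) auto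

lemma supnorm_upper:
  assumes "continuous_on {a..b} f" "y \<in> {a..b}"
  shows "cmod (f y) \<le> supnorm a b f"
  unfolding supnorm_def using assms by (intro continuous_on_Icc_SUP_upper continuous_intros)

lemma supnorm_least:
  assumes "a \<le> b" "\<forall>y\<in>{a..b}. cmod (f y) \<le> C"
  shows "supnorm a b f \<le> C"
  unfolding supnorm_def using assms by (intro cSUP_least) auto

lemma supnorm_pos:
  assumes "continuous_on {a..b} f" "x \<in> {a..b}" "f x \<noteq> 0"
  shows "0 < supnorm a b f"
  using supnorm_upper[OF assms(1,2)] assms(3) by (meson order_less_le_trans zero_less_norm_iff)

lemma supnorm_nonneg:
  assumes "a \<le> b" "continuous_on {a..b} f"
  shows "0 \<le> supnorm a b f"
  using supnorm_upper[OF assms(2), of a] assms(1) by (auto intro: order_trans[OF norm_ge_zero])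

locale weighted_interval =
  fixes a b :: real and w :: "real \<Rightarrow> real"
  assumes ab: "a < b" and w_cont: "continuous_on {a..b} w" and w_pos: "\<forall>x\<in>{a..b}. 0 < w x"
begin

lemma winner_integrable:
  assumes "continuous_on {a..b} f" "continuous_on {a..b} g"
  shows "(\<lambda>x. f x * cnj (g x) * of_real (w x)) integrable_on {a..b}"
  using assms w_cont by (intro integrable_continuous_real continuous_intros)

lemma winner_cnj: "winner a b w g f = cnj (winner a b w f g)"
  unfolding winner_def integral_cnj by (simp add: mult.commute)

lemma winner_add_left:
  assumes "continuous_on {a..b} f" "continuous_on {a..b} g" "continuous_on {a..b} h"
  shows "winner a b w (\<lambda>x. f x + g x) h = winner a b w f h + winner a b w g h"
  unfolding winner_def distrib_right
  by (intro integral_add winner_integrable assms)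

lemma winner_diff_left:
  assumes "continuous_on {a..b} f" "continuous_on {a..b} g" "continuous_on {a..b} h"
  shows "winner a b w (\<lambda>x. f x - g x) h = winner a b w f h - winner a b w g h"
  unfolding winner_def left_diff_distrib
  by (intro integral_diff winner_integrable assms)

lemma winner_sum_left:
  assumes "finite J" "\<forall>j\<in>J. continuous_on {a..b} (F j)" "continuous_on {a..b} g"
  shows "winner a b w (\<lambda>x. \<Sum>j\<in>J. c j * F j x) g = (\<Sum>j\<in>J. c j * winner a b w (F j) g)"
proof -
  have "winner a b w (\<lambda>x. \<Sum>j\<in>J. c j * F j x) g
      = integral {a..b} (\<lambda>x. \<Sum>j\<in>J. c j * (F j x * cnj (g x) * of_real (w x)))"
    unfolding winner_def by (simp add: sum_distrib_right mult.assoc)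
  also have "\<dots> = (\<Sum>j\<in>J. c j * winner a b w (F j) g)"
    unfolding winner_def using assms
    by (subst integral_sum) (auto intro!: integrable_on_mult_right winner_integrable)
  finally show ?thesis .
qed

lemma winner_sum_right:
  assumes "finite J" "\<forall>j\<in>J. continuous_on {a..b} (F j)" "continuous_on {a..b} g"
  shows "winner a b w g (\<lambda>x. \<Sum>j\<in>J. c j * F j x) = (\<Sum>j\<in>J. cnj (c j) * winner a b w g (F j))"
  using winner_sum_left[OF assms, of c]
  by (simp add: winner_cnj[of g] winner_cnj[of g "F _"])

lemma winner_self:
  assumes "continuous_on {a..b} h"
  shows "winner a b w h h = of_real (integral {a..b} (\<lambda>x. (cmod (h x))\<^sup>2 * w x))"
proof -
  have "(\<lambda>x. (cmod (h x))\<^sup>2 * w x) integrable_on {a..b}"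
    using assms w_cont by (intro integrable_continuous_real continuous_intros)
  then have "((\<lambda>x. complex_of_real ((cmod (h x))\<^sup>2 * w x)) has_integral
      of_real (integral {a..b} (\<lambda>x. (cmod (h x))\<^sup>2 * w x))) {a..b}"
    by (intro has_integral_of_real integrable_integral)
  moreover have "(\<lambda>x. h x * cnj (h x) * of_real (w x)) = (\<lambda>x. complex_of_real ((cmod (h x))\<^sup>2 * w x))"
    by (simp only: of_real_mult complex_norm_square)
  ultimately show ?thesis
    unfolding winner_def by (simp add: integral_unique)
qed

lemma weighted_sq_integral_nonneg:
  assumes "continuous_on {a..b} h"
  shows "0 \<le> integral {a..b} (\<lambda>x. (cmod (h x))\<^sup>2 * w x)"
  using assms w_cont w_pos
  by (intro integral_nonneg integrable_continuous_real continuous_intros) (auto simp: less_imp_le)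

lemma weighted_sq_integral_eq_0_imp_zero:
  assumes "continuous_on {a..b} h" "integral {a..b} (\<lambda>x. (cmod (h x))\<^sup>2 * w x) = 0"
    and x: "x \<in> {a..b}"
  shows "h x = 0"
proof -
  have cont: "continuous_on (cbox a b) (\<lambda>x. (cmod (h x))\<^sup>2 * w x)"
    using assms(1) w_cont by (auto intro!: continuous_intros)
  have "((\<lambda>x. (cmod (h x))\<^sup>2 * w x) has_integral 0) (cbox a b)"
    using integrable_integral[OF integrable_continuous[OF cont]] assms(2) by simp
  then have "(cmod (h x))\<^sup>2 * w x = 0"
    using ab x w_pos by (intro has_integral_0_cbox_imp_0[OF cont]) (auto simp: box_real less_imp_le)
  moreover have "0 < w x" using x w_pos by blast
  ultimately show ?thesis by simp
qed

lemma winner_add_self_orthogonal: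
  assumes "continuous_on {a..b} e" "continuous_on {a..b} d" "winner a b w e d = 0"
  shows "winner a b w (\<lambda>x. e x + d x) (\<lambda>x. e x + d x) = winner a b w e e + winner a b w d d"
proof -
  have "winner a b w d e = 0" using assms(3) winner_cnj[of d e] by simp
  moreover have "winner a b w h (\<lambda>x. e x + d x) = winner a b w h e + winner a b w h d"
    if "continuous_on {a..b} h" for h
    using winner_add_left[OF assms(1,2) that] winner_cnj[of h "\<lambda>x. e x + d x"]
      winner_cnj[of h e] winner_cnj[of h d] by simp
  ultimately show ?thesis
    using assms by (simp add: winner_add_left continuous_on_add)
qed

lemma norm_winner_le:
  assumes "continuous_on {a..b} f" "continuous_on {a..b} g"
  shows "cmod (winner a b w f g) \<le> supnorm a b f * integral {a..b} (\<lambda>x. cmod (g x) * w x)"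
proof -
  have "cmod (winner a b w f g) \<le> integral {a..b} (\<lambda>x. supnorm a b f * (cmod (g x) * w x))"
    unfolding winner_def
  proof (rule integral_norm_bound_integral)
    show "(\<lambda>x. f x * cnj (g x) * of_real (w x)) integrable_on {a..b}"
      using assms by (rule winner_integrable)
    show "(\<lambda>x. supnorm a b f * (cmod (g x) * w x)) integrable_on {a..b}"
      using assms(2) w_cont by (intro integrable_continuous_real continuous_intros)
    fix x assume x: "x \<in> {a..b}"
    then have "cmod (f x) \<le> supnorm a b f" using assms(1) by (rule supnorm_upper[rotated])
    moreover have "0 < w x" using x w_pos by blast
    ultimately show "norm (f x * cnj (g x) * of_real (w x)) \<le> supnorm a b f * (cmod (g x) * w x)"
      by (simp add: norm_mult mult.assoc mult_right_mono)
  qed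
  then show ?thesis by simp
qed

end

locale weighted_basis = weighted_interval +
  fixes n :: nat and B :: "nat \<Rightarrow> real \<Rightarrow> complex"
  assumes B_cont: "\<forall>j\<in>{1..n}. continuous_on {a..b} (B j)" and B_indep: "lin_indep_on a b n B"
begin

lemma continuous_on_span: "continuous_on {a..b} (\<lambda>x. \<Sum>k=1..n. t k * B k x)"
  using B_cont by (intro continuous_intros) auto

lemma weighted_sq_integral_basis_pos:
  assumes j: "j \<in> {1..n}"
  shows "0 < integral {a..b} (\<lambda>x. (cmod (B j x))\<^sup>2 * w x)"
proof (rule ccontr)
  assume "\<not> ?thesis"
  then have "integral {a..b} (\<lambda>x. (cmod (B j x))\<^sup>2 * w x) = 0"
    using weighted_sq_integral_nonneg B_cont j by force
  then have "B j x = 0" if "x \<in> {a..b}" for x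
    using weighted_sq_integral_eq_0_imp_zero B_cont j that by blast
  moreover have "(\<Sum>k=1..n. (if k = j then 1 else 0) * B k x) = B j x" for x
  proof -
    have "(\<Sum>k=1..n. (if k = j then 1 else 0) * B k x) = (\<Sum>k=1..n. if k = j then B k x else 0)"
      by (rule sum.cong) auto
    also have "\<dots> = B j x" using j by simp
    finally show ?thesis .
  qed
  ultimately have "\<forall>x\<in>{a..b}. (\<Sum>k=1..n. (if k = j then 1 else 0) * B k x) = 0" by simp
  from B_indep[unfolded lin_indep_on_def, THEN spec, THEN mp, OF this]
  have "(if j = j then 1 else 0 :: complex) = 0" using j by blast
  then show False by simp
qed

lemma weighted_norm_sq_residual:
  assumes f: "continuous_on {a..b} f"
    and orth: "\<forall>i\<in>{1..n}. winner a b w (\<lambda>y. f y - (\<Sum>k=1..n. x k * B k y)) (B i) = 0"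
  shows "Re (winner a b w (\<lambda>y. f y - (\<Sum>k=1..n. t k * B k y)) (\<lambda>y. f y - (\<Sum>k=1..n. t k * B k y)))
       = Re (winner a b w (\<lambda>y. f y - (\<Sum>k=1..n. x k * B k y)) (\<lambda>y. f y - (\<Sum>k=1..n. x k * B k y)))
         + integral {a..b} (\<lambda>y. (cmod (\<Sum>k=1..n. (x k - t k) * B k y))\<^sup>2 * w y)"
proof -
  define e where "e = (\<lambda>y. f y - (\<Sum>k=1..n. x k * B k y))"
  define d where "d = (\<lambda>y. \<Sum>k=1..n. (x k - t k) * B k y)"
  have ec: "continuous_on {a..b} e" unfolding e_def by (intro continuous_intros f continuous_on_span)
  have dc: "continuous_on {a..b} d" unfolding d_def by (rule continuous_on_span)
  have "(\<lambda>y. f y - (\<Sum>k=1..n. t k * B k y)) = (\<lambda>y. e y + d y)"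
    unfolding e_def d_def by (auto simp: left_diff_distrib sum_subtractf)
  moreover have "winner a b w e d = 0"
    unfolding d_def using winner_sum_right[of "{1..n}" B e] B_cont ec orth
    by (simp add: e_def)
  ultimately have "winner a b w (\<lambda>y. f y - (\<Sum>k=1..n. t k * B k y)) (\<lambda>y. f y - (\<Sum>k=1..n. t k * B k y))
      = winner a b w e e + of_real (integral {a..b} (\<lambda>y. (cmod (d y))\<^sup>2 * w y))"
    using winner_add_self_orthogonal[OF ec dc] winner_self[OF dc] by metis
  then show ?thesis unfolding e_def d_def by simp
qed

lemma projU_eqI:
  assumes f: "continuous_on {a..b} f"
    and orth: "\<forall>i\<in>{1..n}. winner a b w (\<lambda>y. f y - (\<Sum>k=1..n. x k * B k y)) (B i) = 0"
  shows "projU a b w n B f = (\<lambda>y. \<Sum>k=1..n. x k * B k y)"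
proof -
  let ?u = "\<lambda>y. \<Sum>k=1..n. x k * B k y"
  let ?R = "Re (winner a b w (\<lambda>y. f y - ?u y) (\<lambda>y. f y - ?u y))"
  let ?D = "\<lambda>t. integral {a..b} (\<lambda>y. (cmod (\<Sum>k=1..n. (x k - t k) * B k y))\<^sup>2 * w y)"
  have wnorm_residual: "wnorm a b w (\<lambda>y. f y - (\<Sum>k=1..n. t k * B k y)) = sqrt (?R + ?D t)" for t
    unfolding wnorm_def by (subst weighted_norm_sq_residual[OF f orth, of t]) (rule refl)
  have D_nonneg: "0 \<le> ?D t" for t
    by (rule weighted_sq_integral_nonneg[OF continuous_on_span])
  have u_best: "wnorm a b w (\<lambda>y. f y - ?u y) \<le> wnorm a b w (\<lambda>y. f y - (\<Sum>k=1..n. t k * B k y))" for t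
    unfolding wnorm_residual using D_nonneg[of t] by simp
  show ?thesis
    unfolding projU_def
  proof (rule the_equality)
    show "?u \<in> spanB n B \<and> (\<forall>v\<in>spanB n B. wnorm a b w (\<lambda>y. f y - ?u y) \<le> wnorm a b w (\<lambda>y. f y - v y))"
      using u_best unfolding spanB_def by blast
  next
    fix u' assume u': "u' \<in> spanB n B \<and>
      (\<forall>v\<in>spanB n B. wnorm a b w (\<lambda>y. f y - u' y) \<le> wnorm a b w (\<lambda>y. f y - v y))"
    then obtain t where t: "u' = (\<lambda>y. \<Sum>k=1..n. t k * B k y)" unfolding spanB_def by blast
    have "?u \<in> spanB n B" unfolding spanB_def by blast
    with u' have "wnorm a b w (\<lambda>y. f y - (\<Sum>k=1..n. t k * B k y)) \<le> wnorm a b w (\<lambda>y. f y - ?u y)"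
      unfolding t by auto
    then have "?D t \<le> 0"
      unfolding wnorm_residual by simp
    then have "?D t = 0" using D_nonneg[of t] by simp
    then have "(\<Sum>k=1..n. (x k - t k) * B k y) = 0" if "y \<in> {a..b}" for y
      using weighted_sq_integral_eq_0_imp_zero[OF continuous_on_span[of "\<lambda>k. x k - t k"] _ that]
      by blast
    then have "\<forall>k\<in>{1..n}. x k - t k = 0"
      using B_indep[unfolded lin_indep_on_def, THEN spec[of _ "\<lambda>k. x k - t k"]] by blast
    then show "u' = ?u" unfolding t by (intro ext sum.cong) auto
  qed
qed

lemma projU_normal_equations:
  assumes inj: "\<And>v. \<forall>i\<in>{1..n}. (\<Sum>k=1..n. winner a b w (B k) (B i) * v k) = 0 \<Longrightarrow> \<forall>k\<in>{1..n}. v k = 0"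
    and f: "continuous_on {a..b} f"
  obtains x where "projU a b w n B f = (\<lambda>y. \<Sum>k=1..n. x k * B k y)"
    and "\<forall>i\<in>{1..n}. (\<Sum>k=1..n. winner a b w (B k) (B i) * x k) = winner a b w f (B i)"
proof -
  have "\<exists>x. \<forall>i\<in>{1..n}. (\<Sum>k=1..n. winner a b w (B k) (B i) * x k) = winner a b w f (B i)"
    by (rule square_system_solvable_if_injective) (rule inj)
  then obtain x where x: "\<forall>i\<in>{1..n}. (\<Sum>k=1..n. winner a b w (B k) (B i) * x k) = winner a b w f (B i)"
    by blast
  have "winner a b w (\<lambda>y. f y - (\<Sum>k=1..n. x k * B k y)) (B i) = 0" if i: "i \<in> {1..n}" for i
  proof -
    have Bi: "continuous_on {a..b} (B i)" using B_cont i by blast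
    have "winner a b w (\<lambda>y. \<Sum>k=1..n. x k * B k y) (B i) = (\<Sum>k=1..n. x k * winner a b w (B k) (B i))"
      using B_cont Bi by (intro winner_sum_left) auto
    also have "\<dots> = winner a b w f (B i)"
      using x i by (simp add: mult.commute)
    finally show ?thesis
      using winner_diff_left[OF f continuous_on_span Bi] by simp
  qed
  with x show thesis by (intro that projU_eqI f) auto
qed

text \<open>Row dominance of the coefficient matrix \<open>(\<langle>B_k, B_j\<rangle>_w)_{j,k}\<close> of the normal equations.
  It is the transpose of the Hermitian matrix \<open>S\<close>, so this is row dominance of \<open>S\<close>.\<close>
definition gram_dominant :: "real \<Rightarrow> bool" where
  "gram_dominant c \<longleftrightarrow> (\<forall>j\<in>{1..n}.
     (\<Sum>k\<in>{1..n} - {j}. cmod (winner a b w (B k) (B j))) \<le> c * cmod (winner a b w (B j) (B j)))"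

lemma norm_gram_diag:
  assumes "j \<in> {1..n}"
  shows "cmod (winner a b w (B j) (B j)) = integral {a..b} (\<lambda>x. (cmod (B j x))\<^sup>2 * w x)"
  using winner_self[of "B j"] weighted_sq_integral_basis_pos[OF assms] B_cont assms by simp

lemma gram_injective:
  assumes "c < 1" "gram_dominant c"
    and "\<forall>i\<in>{1..n}. (\<Sum>k=1..n. winner a b w (B k) (B i) * v k) = 0"
  shows "\<forall>k\<in>{1..n}. v k = 0"
proof (rule row_dominant_injective[where G = "\<lambda>i k. winner a b w (B k) (B i)"])
  show "\<forall>j\<in>{1..n}. winner a b w (B j) (B j) \<noteq> 0"
    using norm_gram_diag weighted_sq_integral_basis_pos by fastforce
qed (use assms in \<open>auto simp: gram_dominant_def\<close>)

lemma normal_equations_coefficient_bound: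
  assumes c: "c < 1" and dominant: "gram_dominant c" and f: "continuous_on {a..b} f"
    and x: "\<forall>i\<in>{1..n}. (\<Sum>k=1..n. winner a b w (B k) (B i) * x k) = winner a b w f (B i)"
    and k: "k \<in> {1..n}"
  shows "cmod (x k) \<le> supnorm a b f / (1 - c) *
     Max ((\<lambda>j. integral {a..b} (\<lambda>y. cmod (B j y) * w y) /
               integral {a..b} (\<lambda>y. (cmod (B j y))\<^sup>2 * w y)) ` {1..n})"
proof -
  define I1 where "I1 j = integral {a..b} (\<lambda>y. cmod (B j y) * w y)" for j
  define I2 where "I2 j = integral {a..b} (\<lambda>y. (cmod (B j y))\<^sup>2 * w y)" for j
  obtain j where j: "j \<in> {1..n}" and jmax: "\<forall>k\<in>{1..n}. cmod (x k) \<le> cmod (x j)"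
    and row: "(1 - c) * cmod (winner a b w (B j) (B j)) * cmod (x j)
              \<le> cmod (\<Sum>k=1..n. winner a b w (B k) (B j) * x k)"
    using row_dominant_max_index[of "{1..n}" "\<lambda>i k. winner a b w (B k) (B i)" c x] k dominant
    unfolding gram_dominant_def by auto
  have Bj: "continuous_on {a..b} (B j)" using B_cont j by blast
  have "(1 - c) * I2 j * cmod (x j) \<le> supnorm a b f * I1 j"
    using row norm_winner_le[OF f Bj] x j norm_gram_diag[OF j] unfolding I1_def I2_def by simp
  moreover have "0 < (1 - c) * I2 j"
    using c weighted_sq_integral_basis_pos[OF j] unfolding I2_def by simp
  ultimately have "cmod (x j) \<le> supnorm a b f / (1 - c) * (I1 j / I2 j)"
    by (simp add: pos_le_divide_eq mult.commute mult.left_commute)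
  also have "\<dots> \<le> supnorm a b f / (1 - c) * Max ((\<lambda>j. I1 j / I2 j) ` {1..n})"
    using supnorm_nonneg[OF _ f] ab c j by (intro mult_left_mono Max_ge) auto
  finally show ?thesis using jmax k unfolding I1_def I2_def by (meson order_trans)
qed

lemma supnorm_span_le:
  assumes "\<forall>k\<in>{1..n}. cmod (x k) \<le> C"
  shows "supnorm a b (\<lambda>y. \<Sum>k=1..n. x k * B k y) \<le> C * (SUP y\<in>{a..b}. \<Sum>k=1..n. cmod (B k y))"
proof (cases "n = 0")
  case True
  then show ?thesis using ab by (simp add: supnorm_def)
next
  case False
  then have "cmod (x 1) \<le> C" using assms by simp
  then have "0 \<le> C" by (rule order_trans[OF norm_ge_zero])
  have "cmod (\<Sum>k=1..n. x k * B k y) \<le> C * (SUP y\<in>{a..b}. \<Sum>k=1..n. cmod (B k y))"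
    if y: "y \<in> {a..b}" for y
  proof -
    have "cmod (\<Sum>k=1..n. x k * B k y) \<le> (\<Sum>k=1..n. C * cmod (B k y))"
      using assms by (intro order.trans[OF norm_sum] sum_mono) (auto simp: norm_mult intro: mult_right_mono)
    also have "\<dots> \<le> C * (SUP y\<in>{a..b}. \<Sum>k=1..n. cmod (B k y))"
      unfolding sum_distrib_left[symmetric] using \<open>0 \<le> C\<close> B_cont y
      by (intro mult_left_mono continuous_on_Icc_SUP_upper continuous_intros) auto
    finally show ?thesis .
  qed
  then show ?thesis using ab by (intro supnorm_least) auto
qed

lemma supnorm_projU_le:
  assumes c: "c < 1" and dominant: "gram_dominant c" and f: "continuous_on {a..b} f"
  shows "supnorm a b (projU a b w n B f) \<le> supnorm a b f / (1 - c) *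
     Max ((\<lambda>j. integral {a..b} (\<lambda>y. cmod (B j y) * w y) /
               integral {a..b} (\<lambda>y. (cmod (B j y))\<^sup>2 * w y)) ` {1..n}) *
     (SUP y\<in>{a..b}. \<Sum>k=1..n. cmod (B k y))"
proof -
  obtain x where proj: "projU a b w n B f = (\<lambda>y. \<Sum>k=1..n. x k * B k y)"
    and x: "\<forall>i\<in>{1..n}. (\<Sum>k=1..n. winner a b w (B k) (B i) * x k) = winner a b w f (B i)"
    using projU_normal_equations[OF gram_injective[OF c dominant] f] by blast
  show ?thesis
    unfolding proj using normal_equations_coefficient_bound[OF c dominant f x]
    by (intro supnorm_span_le) blast
qed

lemma gram_dominant_if_tridiagonal:
  assumes tridiag: "\<forall>i\<in>{1..n}. \<forall>j\<in>{1..n}. \<bar>int i - int j\<bar> \<ge> 2 \<longrightarrow> winner a b w (B i) (B j) = 0"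
    and diagdom: "\<forall>j\<in>{1..n}.
        (if j = 1 then 0 else cmod (winner a b w (B (j - 1)) (B j)))
      + (if j = n then 0 else cmod (winner a b w (B j) (B (j + 1))))
      \<le> c * cmod (winner a b w (B j) (B j))"
  shows "gram_dominant c"
  unfolding gram_dominant_def
proof
  fix j assume j: "j \<in> {1..n}"
  have "\<forall>k\<in>{1..n}. 2 \<le> \<bar>int j - int k\<bar> \<longrightarrow> winner a b w (B k) (B j) = 0"
    using tridiag j by (simp add: abs_minus_commute)
  then have "(\<Sum>k\<in>{1..n} - {j}. cmod (winner a b w (B k) (B j)))
      = (if j = 1 then 0 else cmod (winner a b w (B (j - 1)) (B j)))
      + (if j = n then 0 else cmod (winner a b w (B j) (B (j + 1))))"
    using tridiagonal_offdiag_sum[of n j "\<lambda>i k. winner a b w (B k) (B i)"] j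
      winner_cnj[of "B j" "B (j + 1)"] by simp
  with diagdom j show "(\<Sum>k\<in>{1..n} - {j}. cmod (winner a b w (B k) (B j)))
      \<le> c * cmod (winner a b w (B j) (B j))" by simp
qed

lemma projU_opnorm_le:
  assumes c: "c < 1" and dominant: "gram_dominant c"
  shows "projU_opnorm a b w n B \<le>
     (SUP x\<in>{a..b}. \<Sum>j=1..n. cmod (B j x)) / (1 - c) *
     Max ((\<lambda>j. integral {a..b} (\<lambda>y. cmod (B j y) * w y) /
               integral {a..b} (\<lambda>y. (cmod (B j y))\<^sup>2 * w y)) ` {1..n})"
  unfolding projU_opnorm_def
proof (rule cSup_least)
  show "{supnorm a b (projU a b w n B f) / supnorm a b f |f.
      continuous_on {a..b} f \<and> (\<exists>x\<in>{a..b}. f x \<noteq> 0)} \<noteq> {}"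
    using ab by (auto intro!: exI[of _ "\<lambda>_. 1"] bexI[of _ a])
next
  fix r assume "r \<in> {supnorm a b (projU a b w n B f) / supnorm a b f |f.
      continuous_on {a..b} f \<and> (\<exists>x\<in>{a..b}. f x \<noteq> 0)}"
  then obtain f x where r: "r = supnorm a b (projU a b w n B f) / supnorm a b f"
    and f: "continuous_on {a..b} f" and x: "x \<in> {a..b}" "f x \<noteq> 0" by blast
  show "r \<le> (SUP x\<in>{a..b}. \<Sum>j=1..n. cmod (B j x)) / (1 - c) *
     Max ((\<lambda>j. integral {a..b} (\<lambda>y. cmod (B j y) * w y) /
               integral {a..b} (\<lambda>y. (cmod (B j y))\<^sup>2 * w y)) ` {1..n})"
    unfolding r using supnorm_projU_le[OF c dominant f] supnorm_pos[OF f x]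
    by (simp add: divide_le_eq mult_ac)
qed

end

theorem mainTheorem12:
  fixes a b c :: real and w :: "real \<Rightarrow> real" and n :: nat
    and B :: "nat \<Rightarrow> real \<Rightarrow> complex"
  assumes ab: "a < b"
    and w_cont: "continuous_on {a..b} w" and w_pos: "\<forall>x\<in>{a..b}. w x > 0"
    and n_pos: "n \<ge> 1"
    and B_cont: "\<forall>j\<in>{1..n}. continuous_on {a..b} (B j)"
    and B_indep: "lin_indep_on a b n B"
    and tridiag: "\<forall>i\<in>{1..n}. \<forall>j\<in>{1..n}. \<bar>int i - int j\<bar> \<ge> 2 \<longrightarrow> winner a b w (B i) (B j) = 0"
    and c_range: "0 < c" "c < 1"
    and diagdom: "\<forall>j\<in>{1..n}.
        (if j = 1 then 0 else cmod (winner a b w (B (j - 1)) (B j)))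
      + (if j = n then 0 else cmod (winner a b w (B j) (B (j + 1))))
      \<le> c * cmod (winner a b w (B j) (B j))"
  shows "projU_opnorm a b w n B \<le>
     (SUP x\<in>{a..b}. \<Sum>j=1..n. cmod (B j x)) / (1 - c) *
     Max ((\<lambda>j. integral {a..b} (\<lambda>y. cmod (B j y) * w y) /
               integral {a..b} (\<lambda>y. (cmod (B j y))\<^sup>2 * w y)) ` {1..n})"
proof -
  interpret weighted_basis a b w n B
    using ab w_cont w_pos B_cont B_indep by unfold_locales auto
  show ?thesis
    using projU_opnorm_le[OF c_range(2) gram_dominant_if_tridiagonal[OF tridiag diagdom]] .
qed

end
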